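(* Let $\mathcal{U}\subset\mathbb{R}^n\times\mathbb{R}^p$ be open, $\mathcal{D}\subset\mathcal{U}$ nonempty, $\Gamma:\mathcal{D}\times\mathbb{R}^m\rightrightarrows\mathbb{R}^q$ with $\Gamma(\xi,\cdot)$ positively homogeneous for all $\xi\in\mathcal{D}$, and let $\bar\xi\in\mathcal{D}$, $H:=\Gamma(\bar\xi,\cdot)$. Suppose $\Gamma$ is outer semicontinuous and that there are $s\le q$ and $\mathcal{T}:\mathbb{R}^m\rightrightarrows\mathbb{R}^{q-s}$ with $H(z)=\{0\}\times\mathcal{T}(z)$ for all $z\in\mathbb{R}^m$ (where $0\in\mathbb{R}^s$). If $\mathcal{T}(0)=\{0\}$ and $\mathcal{T}^{-1}(0)=\{0\}$, then the mapping $\mathcal{K}(\xi,z):=\mathrm{cone}(\Gamma(\xi,z))$ on $\mathcal{D}\times\mathbb{R}^m$ is outer semicontinuous relative to $\mathcal{D}\times\mathrm{bd}\,\mathbb{B}$ at $(\bar\xi,z)$ for every $z\in\mathrm{bd}\,\mathbb{B}\cap\mathrm{dom}\,H$.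
   Context: $\mathbb{B}$ closed unit ball, $\mathrm{bd}$ boundary, $\mathrm{cone}(Z):=\bigcup_{\gamma\ge0}\gamma Z$, $\mathcal{T}^{-1}(0):=\{z\mid 0\in\mathcal{T}(z)\}$. Positive homogeneity: $H(\gamma z)=\gamma H(z)$ for all $\gamma>0$. A map $M$ is outer semicontinuous at $x$ relative to $X$ if $\limsup_{x'\to x,\,x'\in X}M(x')\subset M(x)$ (Painlevé–Kuratowski); $\Gamma$ outer semicontinuous means this at every point of $\mathcal{D}\times\mathbb{R}^m$. *)

theory Defs
  imports "HOL-Analysis.Analysis"
begin

definition osc_rel :: "('a::topological_space \<Rightarrow> 'b::topological_space set) \<Rightarrow> 'a set \<Rightarrow> 'a \<Rightarrow> bool" where
  "osc_rel M X x \<longleftrightarrow>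
     (\<forall>xs ys y. (\<forall>k. xs k \<in> X) \<longrightarrow> xs \<longlonglongrightarrow> x \<longrightarrow>
        (\<forall>k. ys k \<in> M (xs k)) \<longrightarrow> ys \<longlonglongrightarrow> y \<longrightarrow> y \<in> M x)"

definition gen_cone :: "'a::real_vector set \<Rightarrow> 'a set" where
  "gen_cone Z = (\<Union>\<gamma>\<in>{0..}. (\<lambda>y. \<gamma> *\<^sub>R y) ` Z)"

definition pos_homogeneous :: "('a::real_vector \<Rightarrow> 'b::real_vector set) \<Rightarrow> bool" where
  "pos_homogeneous H \<longleftrightarrow> (\<forall>\<gamma>::real. \<forall>z. \<gamma> > 0 \<longrightarrow> H (\<gamma> *\<^sub>R z) = (\<lambda>y. \<gamma> *\<^sub>R y) ` H z)"

definition sv_dom :: "('a \<Rightarrow> 'b set) \<Rightarrow> 'a set" where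
  "sv_dom H = {z. H z \<noteq> {}}"

definition sv_inv_zero :: "('a \<Rightarrow> 'b::zero set) \<Rightarrow> 'a set" where
  "sv_inv_zero T = {z. 0 \<in> T z}"

end

theory Submission
  imports Defs
begin

text \<open>Write \<open>y\<^sub>k = g\<^sub>k w\<^sub>k\<close> with \<open>g\<^sub>k \<ge> 0\<close> and \<open>w\<^sub>k \<in> \<Gamma>(\<xi>\<^sub>k, z\<^sub>k)\<close>. Rescaling by
  \<open>a\<^sub>k = 1 / (1 + |w\<^sub>k|)\<close> and using homogeneity gives \<open>a\<^sub>k w\<^sub>k \<in> \<Gamma>(\<xi>\<^sub>k, a\<^sub>k z\<^sub>k)\<close>, a bounded
  sequence of norm \<open>1 - a\<^sub>k\<close>. If \<open>a\<^sub>k \<rightarrow> 0\<close> along a subsequence, outer semicontinuity would put a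
  unit vector into \<open>H(0) = {0}\<close>; so the \<open>w\<^sub>k\<close> have a convergent subsequence. Its limit \<open>w\<close> lies
  in \<open>H(z)\<close> and is nonzero because \<open>T\<^sup>-\<^sup>1(0) = {0}\<close>, and then \<open>y\<close> is a nonnegative multiple
  of \<open>w\<close>.\<close>

lemma osc_relD:
  assumes "osc_rel M X x" and "\<And>k. xs k \<in> X" and "xs \<longlonglongrightarrow> x"
    and "\<And>k. ys k \<in> M (xs k)" and "ys \<longlonglongrightarrow> y"
  shows "y \<in> M x"
  using assms unfolding osc_rel_def by blast

lemma gen_cone_iff: "y \<in> gen_cone Z \<longleftrightarrow> (\<exists>c \<ge> 0. \<exists>w \<in> Z. y = c *\<^sub>R w)"
  unfolding gen_cone_def by auto

lemma pos_homogeneous_scaleR_mem: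
  assumes "pos_homogeneous H" and "c > 0" and "w \<in> H z"
  shows "c *\<^sub>R w \<in> H (c *\<^sub>R z)"
  using assms unfolding pos_homogeneous_def by blast

lemma tendsto_nonneg_multiples_on_ray:
  fixes w :: "nat \<Rightarrow> 'a::real_normed_vector"
  assumes w: "w \<longlonglongrightarrow> w0" and "w0 \<noteq> 0" and g: "\<And>k. g k \<ge> 0"
    and y: "(\<lambda>k. g k *\<^sub>R w k) \<longlonglongrightarrow> y"
  shows "\<exists>c \<ge> 0. y = c *\<^sub>R w0"
proof -
  have "eventually (\<lambda>k. w k \<noteq> 0) sequentially"
    using tendsto_imp_eventually_ne[OF w \<open>w0 \<noteq> 0\<close>] .
  then have "eventually (\<lambda>k. norm (g k *\<^sub>R w k) / norm (w k) = g k) sequentially"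
    by eventually_elim (simp add: g)
  moreover have "(\<lambda>k. norm (g k *\<^sub>R w k) / norm (w k)) \<longlonglongrightarrow> norm y / norm w0"
    using \<open>w0 \<noteq> 0\<close> by (intro tendsto_intros w y) simp
  ultimately have "g \<longlonglongrightarrow> norm y / norm w0"
    by (rule Lim_transform_eventually[rotated])
  then have "(\<lambda>k. g k *\<^sub>R w k) \<longlonglongrightarrow> (norm y / norm w0) *\<^sub>R w0"
    by (intro tendsto_intros w)
  with y have "y = (norm y / norm w0) *\<^sub>R w0"
    using LIMSEQ_unique by blast
  then show ?thesis by (intro exI[of _ "norm y / norm w0"]) simp
qed

lemma rescaled_convergent_subseq:
  fixes w :: "nat \<Rightarrow> 'b::{real_normed_vector,heine_borel}"
  obtains r u0 a0 where "strict_mono r"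
    and "(\<lambda>k. (1 / (1 + norm (w (r k)))) *\<^sub>R w (r k)) \<longlonglongrightarrow> u0"
    and "(\<lambda>k. 1 / (1 + norm (w (r k)))) \<longlonglongrightarrow> a0" and "norm u0 = 1 - a0"
proof -
  define a where "a k = 1 / (1 + norm (w k))" for k
  have norm_scaled: "norm (a k *\<^sub>R w k) = 1 - a k" and a_range: "a k \<in> {0..1}" for k
  proof -
    have "1 + norm (w k) > 0"
      by (simp add: add_pos_nonneg)
    then show "norm (a k *\<^sub>R w k) = 1 - a k" and "a k \<in> {0..1}"
      unfolding a_def by (simp_all add: field_simps)
  qed
  have seq_compact_box: "seq_compact (cball (0::'b) 1 \<times> {0..1::real})"
    by (intro compact_imp_seq_compact compact_Times) auto
  have "\<forall>k. (a k *\<^sub>R w k, a k) \<in> cball 0 1 \<times> {0..1}"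
    using norm_scaled a_range by simp
  then obtain l r where "l \<in> cball 0 1 \<times> {0..1}" and r: "strict_mono r"
    and lim: "((\<lambda>k. (a k *\<^sub>R w k, a k)) \<circ> r) \<longlonglongrightarrow> l"
    by (rule seq_compactE[OF seq_compact_box])
  obtain u0 a0 where l: "l = (u0, a0)"
    by (cases l) auto
  have u0: "(\<lambda>k. a (r k) *\<^sub>R w (r k)) \<longlonglongrightarrow> u0" and a0: "(\<lambda>k. a (r k)) \<longlonglongrightarrow> a0"
    using tendsto_fst[OF lim] tendsto_snd[OF lim] l by (simp_all add: o_def)
  have "norm u0 = 1 - a0"
    using LIMSEQ_unique[OF tendsto_norm[OF u0]] tendsto_diff[OF tendsto_const a0] norm_scaled
    by simp
  with r u0 a0 show ?thesis
    unfolding a_def by (rule that)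
qed

lemma osc_pos_homogeneous_convergent_subseq:
  fixes \<Gamma> :: "'a::topological_space \<Rightarrow> 'z::real_normed_vector \<Rightarrow> 'b::{real_normed_vector,heine_borel} set"
  assumes hom: "\<forall>\<xi>\<in>D. pos_homogeneous (\<Gamma> \<xi>)"
    and osc0: "osc_rel (\<lambda>(\<xi>, z). \<Gamma> \<xi> z) (D \<times> UNIV) (\<xi>bar, 0)"
    and zero: "\<Gamma> \<xi>bar 0 \<subseteq> {0}"
    and xs: "\<And>k. fst (xs k) \<in> D" "xs \<longlonglongrightarrow> (\<xi>bar, z)"
    and ws: "\<And>k. ws k \<in> \<Gamma> (fst (xs k)) (snd (xs k))"
  shows "\<exists>r w0. strict_mono r \<and> (ws \<circ> r) \<longlonglongrightarrow> w0"
proof -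
  define a where "a k = 1 / (1 + norm (ws k))" for k
  obtain r u0 a0 where r: "strict_mono r" and u0: "(\<lambda>k. a (r k) *\<^sub>R ws (r k)) \<longlonglongrightarrow> u0"
    and a0: "(\<lambda>k. a (r k)) \<longlonglongrightarrow> a0" and "norm u0 = 1 - a0"
    unfolding a_def by (rule rescaled_convergent_subseq)
  have a_pos: "a k > 0" for k
    unfolding a_def by (simp add: add_pos_nonneg)
  have "a0 \<noteq> 0"
  proof
    assume "a0 = 0"
    have xs_r: "(\<lambda>k. xs (r k)) \<longlonglongrightarrow> (\<xi>bar, z)"
      using LIMSEQ_subseq_LIMSEQ[OF xs(2) r] by (simp add: o_def)
    have "(\<lambda>k. (fst (xs (r k)), a (r k) *\<^sub>R snd (xs (r k)))) \<longlonglongrightarrow> (\<xi>bar, 0)"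
      using tendsto_Pair[OF tendsto_fst[OF xs_r] tendsto_scaleR[OF a0 tendsto_snd[OF xs_r]]]
        \<open>a0 = 0\<close> by simp
    moreover have "a k *\<^sub>R ws k \<in> \<Gamma> (fst (xs k)) (a k *\<^sub>R snd (xs k))" for k
      using hom xs(1) a_pos ws by (blast intro: pos_homogeneous_scaleR_mem)
    ultimately have "u0 \<in> \<Gamma> \<xi>bar 0"
      using osc_relD[OF osc0, of "\<lambda>k. (fst (xs (r k)), a (r k) *\<^sub>R snd (xs (r k)))"
          "\<lambda>k. a (r k) *\<^sub>R ws (r k)"] xs(1) u0
      by auto
    with zero \<open>norm u0 = 1 - a0\<close> \<open>a0 = 0\<close> show False by auto
  qed
  then have "(\<lambda>k. inverse (a (r k)) *\<^sub>R (a (r k) *\<^sub>R ws (r k))) \<longlonglongrightarrow> inverse a0 *\<^sub>R u0"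
    by (intro tendsto_intros a0 u0)
  moreover have "inverse (a (r k)) *\<^sub>R (a (r k) *\<^sub>R ws (r k)) = (ws \<circ> r) k" for k
    using a_pos[of "r k"] by simp
  ultimately have "(ws \<circ> r) \<longlonglongrightarrow> inverse a0 *\<^sub>R u0"
    by (simp only:)
  with r show ?thesis by blast
qed

lemma osc_rel_gen_cone_pos_homogeneous:
  fixes \<Gamma> :: "'a::topological_space \<Rightarrow> 'z::real_normed_vector \<Rightarrow> 'b::{real_normed_vector,heine_borel} set"
  assumes hom: "\<forall>\<xi>\<in>D. pos_homogeneous (\<Gamma> \<xi>)"
    and osc0: "osc_rel (\<lambda>(\<xi>, z). \<Gamma> \<xi> z) (D \<times> UNIV) (\<xi>bar, 0)"
    and osc: "osc_rel (\<lambda>(\<xi>, z). \<Gamma> \<xi> z) (D \<times> UNIV) (\<xi>bar, z)"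
    and zero: "\<Gamma> \<xi>bar 0 \<subseteq> {0}" and nonzero: "0 \<notin> \<Gamma> \<xi>bar z"
  shows "osc_rel (\<lambda>(\<xi>, z). gen_cone (\<Gamma> \<xi> z)) (D \<times> Z) (\<xi>bar, z)"
  unfolding osc_rel_def
proof (intro allI impI)
  fix xs ys y
  assume xs: "\<forall>k. xs k \<in> D \<times> Z" "xs \<longlonglongrightarrow> (\<xi>bar, z)"
    and "\<forall>k. ys k \<in> (\<lambda>(\<xi>, z). gen_cone (\<Gamma> \<xi> z)) (xs k)" and ys: "ys \<longlonglongrightarrow> y"
  then have "\<forall>k. \<exists>c \<ge> 0. \<exists>w \<in> \<Gamma> (fst (xs k)) (snd (xs k)). ys k = c *\<^sub>R w"
    by (simp add: case_prod_beta gen_cone_iff)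
  then obtain g ws where g: "\<And>k. g k \<ge> 0" and ws: "\<And>k. ws k \<in> \<Gamma> (fst (xs k)) (snd (xs k))"
    and ys_eq: "\<And>k. ys k = g k *\<^sub>R ws k"
    by metis
  have xs_D: "\<And>k. fst (xs k) \<in> D"
    using xs(1) by (auto simp: mem_Times_iff)
  obtain r w0 where r: "strict_mono r" and w0: "(ws \<circ> r) \<longlonglongrightarrow> w0"
    using osc_pos_homogeneous_convergent_subseq[OF hom osc0 zero xs_D xs(2) ws] by blast
  have "w0 \<in> \<Gamma> \<xi>bar z"
    using osc_relD[OF osc, of "xs \<circ> r" "ws \<circ> r"] xs_D ws w0 LIMSEQ_subseq_LIMSEQ[OF xs(2) r]
    by (simp add: mem_Times_iff case_prod_beta)
  with nonzero have "w0 \<noteq> 0" by blast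
  have ys_r: "(\<lambda>k. (g \<circ> r) k *\<^sub>R (ws \<circ> r) k) \<longlonglongrightarrow> y"
    using LIMSEQ_subseq_LIMSEQ[OF ys r] by (simp add: o_def ys_eq)
  have "\<exists>c \<ge> 0. y = c *\<^sub>R w0"
    by (rule tendsto_nonneg_multiples_on_ray[OF w0 \<open>w0 \<noteq> 0\<close> _ ys_r]) (simp add: g)
  with \<open>w0 \<in> \<Gamma> \<xi>bar z\<close> show "y \<in> (\<lambda>(\<xi>, z). gen_cone (\<Gamma> \<xi> z)) (\<xi>bar, z)"
    by (auto simp: gen_cone_iff)
qed

theorem proposition3:
  fixes U D :: "((real^'n) \<times> (real^'p)) set"
    and \<Gamma> :: "(real^'n) \<times> (real^'p) \<Rightarrow> real^'m \<Rightarrow> ((real^'s) \<times> (real^'t)) set"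
    and \<xi>bar :: "(real^'n) \<times> (real^'p)"
    and T :: "real^'m \<Rightarrow> (real^'t) set"
  assumes "open U" and "D \<subseteq> U" and "D \<noteq> {}"
    and "\<forall>\<xi>\<in>D. pos_homogeneous (\<Gamma> \<xi>)"
    and "\<xi>bar \<in> D"
    and "\<forall>w \<in> D \<times> UNIV. osc_rel (\<lambda>(\<xi>, z). \<Gamma> \<xi> z) (D \<times> UNIV) w"
    and "\<forall>z. \<Gamma> \<xi>bar z = {0} \<times> T z"
    and "T 0 = {0}" and "sv_inv_zero T = {0}"
  shows "\<forall>z \<in> sphere 0 1 \<inter> sv_dom (\<Gamma> \<xi>bar).
           osc_rel (\<lambda>(\<xi>, z). gen_cone (\<Gamma> \<xi> z)) (D \<times> sphere 0 1) (\<xi>bar, z)"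
proof
  fix z :: "real^'m"
  assume "z \<in> sphere 0 1 \<inter> sv_dom (\<Gamma> \<xi>bar)"
  then have "z \<noteq> 0" by auto
  have "\<Gamma> \<xi>bar 0 \<subseteq> {0}" and "0 \<notin> \<Gamma> \<xi>bar z"
    using assms(7-9) \<open>z \<noteq> 0\<close> by (auto simp: zero_prod_def sv_inv_zero_def)
  with assms(4-6) show "osc_rel (\<lambda>(\<xi>, z). gen_cone (\<Gamma> \<xi> z)) (D \<times> sphere 0 1) (\<xi>bar, z)"
    by (intro osc_rel_gen_cone_pos_homogeneous) auto
qed

end
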